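(* Let $X$ be a real-valued random variable, let $Z\sim\mathcal{N}(0,1)$ be independent of $X$, and set $Y=X+Z$. Let $p\ge 1$. Then $$\min_{a\in\mathbb{R}}\mathbb{E}\big[|X-aY|^p\big]=\min_{a\in[0,1)}\mathbb{E}\big[|X-aY|^p\big].$$ *)

theory Defs
  imports "HOL-Probability.Probability"
begin

end

theory Submission
  imports Defs
begin

text \<open>
  Write \<open>Y = X + Z\<close> and \<open>F a = E|X - a Y|^p\<close>, a convex function of \<open>a\<close>. Let \<open>\<phi>\<close> be a
  subgradient of \<open>|t|^p\<close>; it is odd, so \<open>E \<phi>(c Z) = 0\<close> by the symmetry of \<open>Z\<close>, and by
  independence every term \<open>E[g(X) \<phi>(Z)]\<close> or \<open>E[g(X) Z]\<close> vanishes.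
  For \<open>a < 0\<close>, the tangent inequality at \<open>(1 - a) X\<close> gives
  \<open>F a \<ge> (1 - a)^p E|X|^p + E[\<phi>((1 - a) X) (-a Z)] = (1 - a)^p E|X|^p \<ge> F 0\<close>.
  At \<open>a = 1\<close> we have \<open>X - Y = -Z\<close>, and by dominated convergence the left derivative of
  \<open>F\<close> at \<open>1\<close> is \<open>E[\<phi>(Z) Y] = E[\<phi>(Z) Z] = p E|Z|^p > 0\<close>, so \<open>F\<close> drops below \<open>F 1\<close>
  just to the left of \<open>1\<close>. Convexity then places a global minimiser in \<open>[0, 1)\<close>.
\<close>

section \<open>A subgradient of \<open>|t|^p\<close>\<close>

text \<open>The derivative of \<open>|t|^p\<close> for \<open>t \<noteq> 0\<close>; the value \<open>0\<close> at \<open>t = 0\<close> is a subgradient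
  even for \<open>p = 1\<close>, where no derivative exists.\<close>

definition abs_powr_deriv :: "real \<Rightarrow> real \<Rightarrow> real" where
  "abs_powr_deriv p t = p * sgn t * \<bar>t\<bar> powr (p - 1)"

lemma abs_powr_deriv_measurable [measurable]: "abs_powr_deriv p \<in> borel_measurable borel"
  unfolding abs_powr_deriv_def by measurable

lemma abs_powr_deriv_minus: "abs_powr_deriv p (- t) = - abs_powr_deriv p t"
  by (simp add: abs_powr_deriv_def)

lemma abs_powr_deriv_mult_self: "abs_powr_deriv p t * t = p * \<bar>t\<bar> powr p"
  unfolding abs_powr_deriv_def by (cases "t = 0") (auto simp: powr_diff sgn_if)

lemma isCont_abs_powr_deriv: "t \<noteq> 0 \<Longrightarrow> isCont (abs_powr_deriv p) t"
  unfolding abs_powr_deriv_def by (auto intro!: continuous_intros isCont_sgn)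

lemma powr_above_tangent_pos:
  fixes p x y :: real
  assumes p: "p \<ge> 1" and x: "x > 0"
  shows "x powr p + p * x powr (p - 1) * (y - x) \<le> \<bar>y\<bar> powr p"
proof (cases "y \<le> 0")
  case True
  have "x powr p = x powr (p - 1) * x"
    using x by (simp add: powr_diff)
  then have "x powr p + p * x powr (p - 1) * (y - x) = x powr (p - 1) * (x * (1 - p) + p * y)"
    by (simp add: algebra_simps)
  also have "\<dots> \<le> 0"
    using x p True by (intro mult_nonneg_nonpos add_nonpos_nonpos mult_nonneg_nonpos) auto
  finally show ?thesis using powr_ge_zero[of "\<bar>y\<bar>" p] by linarith
next
  case False
  have "p * x powr (p - 1) * (y - x) \<le> y powr p - x powr p"
  proof (rule convex_on_imp_above_tangent[where A = "{0<..}"])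
    show "convex_on {0<..} (\<lambda>t. t powr p)" using p by (rule powr_convex)
    show "((\<lambda>t. t powr p) has_field_derivative p * x powr (p - 1)) (at x within {0<..})"
      using x by (auto intro!: derivative_eq_intros)
  qed (use x False in \<open>auto simp: interior_open\<close>)
  then show ?thesis using False by simp
qed

lemma abs_powr_above_tangent:
  fixes p x y :: real
  assumes p: "p \<ge> 1"
  shows "\<bar>x\<bar> powr p + abs_powr_deriv p x * (y - x) \<le> \<bar>y\<bar> powr p"
proof (cases x "0::real" rule: linorder_cases)
  case less
  then have "(- x) powr p + p * (- x) powr (p - 1) * (- y - - x) \<le> \<bar>- y\<bar> powr p"
    using p by (intro powr_above_tangent_pos) auto
  then show ?thesis using less by (simp add: abs_powr_deriv_def algebra_simps)
next
  case greater
  then show ?thesis using powr_above_tangent_pos[OF p greater, of y]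
    by (simp add: abs_powr_deriv_def)
qed (simp add: abs_powr_deriv_def)

lemma convex_on_abs_powr:
  fixes p :: real
  assumes p: "p \<ge> 1"
  shows "convex_on UNIV (\<lambda>t. \<bar>t\<bar> powr p)"
proof (rule convex_onI)
  fix t x y :: real
  assume t: "0 < t" "t < 1"
  define z where "z = (1 - t) * x + t * y"
  define d where "d = abs_powr_deriv p z"
  have "(1 - t) * (\<bar>z\<bar> powr p + d * (x - z)) \<le> (1 - t) * \<bar>x\<bar> powr p"
    and "t * (\<bar>z\<bar> powr p + d * (y - z)) \<le> t * \<bar>y\<bar> powr p"
    using t by (auto intro!: mult_left_mono abs_powr_above_tangent p simp: d_def)
  moreover have "(1 - t) * (d * (x - z)) + t * (d * (y - z)) = 0"
    by (simp add: z_def algebra_simps)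
  moreover have "(1 - t) * \<bar>z\<bar> powr p + t * \<bar>z\<bar> powr p = \<bar>z\<bar> powr p"
    by (simp add: algebra_simps)
  ultimately have "\<bar>z\<bar> powr p \<le> (1 - t) * \<bar>x\<bar> powr p + t * \<bar>y\<bar> powr p"
    unfolding distrib_left by linarith
  then show "\<bar>(1 - t) *\<^sub>R x + t *\<^sub>R y\<bar> powr p \<le> (1 - t) * \<bar>x\<bar> powr p + t * \<bar>y\<bar> powr p"
    by (simp add: z_def)
qed simp

lemma abs_add_powr_le:
  fixes p u v :: real
  assumes "p \<ge> 0"
  shows "\<bar>u + v\<bar> powr p \<le> 2 powr p * (\<bar>u\<bar> powr p + \<bar>v\<bar> powr p)"
proof -
  have "\<bar>u + v\<bar> powr p \<le> (2 * max \<bar>u\<bar> \<bar>v\<bar>) powr p"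
    using assms by (intro powr_mono2) auto
  also have "\<dots> = 2 powr p * max \<bar>u\<bar> \<bar>v\<bar> powr p"
    by (simp add: powr_mult)
  also have "max \<bar>u\<bar> \<bar>v\<bar> powr p \<le> \<bar>u\<bar> powr p + \<bar>v\<bar> powr p"
    by (cases "\<bar>u\<bar> \<le> \<bar>v\<bar>") (auto simp: max_def)
  finally show ?thesis by (simp add: mult_left_mono)
qed

lemma abs_powr_le_one_plus:
  fixes p q t :: real
  assumes "0 \<le> q" "q \<le> p"
  shows "\<bar>t\<bar> powr q \<le> 1 + \<bar>t\<bar> powr p"
proof (cases "\<bar>t\<bar> \<le> 1")
  case True
  then have "\<bar>t\<bar> powr q \<le> 1" using assms by (simp add: powr_le1)
  then show ?thesis using powr_ge_zero[of "\<bar>t\<bar>" p] by linarith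
next
  case False
  then have "\<bar>t\<bar> powr q \<le> \<bar>t\<bar> powr p" using assms by (intro powr_mono) auto
  then show ?thesis by simp
qed

lemma abs_powr_deriv_mult_le:
  fixes p t y :: real
  assumes p: "p \<ge> 1"
  shows "\<bar>abs_powr_deriv p t * y\<bar> \<le> p * (\<bar>t\<bar> powr p + \<bar>y\<bar> powr p)"
proof -
  have "\<bar>t\<bar> powr (p - 1) * \<bar>y\<bar> \<le> max \<bar>t\<bar> \<bar>y\<bar> powr (p - 1) * max \<bar>t\<bar> \<bar>y\<bar>"
    using p by (intro mult_mono powr_mono2) auto
  also have "\<dots> = max \<bar>t\<bar> \<bar>y\<bar> powr p"
    by (cases "max \<bar>t\<bar> \<bar>y\<bar> = 0") (auto simp: powr_diff)
  also have "\<dots> \<le> \<bar>t\<bar> powr p + \<bar>y\<bar> powr p"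
    by (cases "\<bar>t\<bar> \<le> \<bar>y\<bar>") (auto simp: max_def)
  finally show ?thesis
    using p unfolding abs_powr_deriv_def abs_mult
    by (cases "t = 0") (auto intro!: mult_left_mono simp: mult.assoc)
qed

text \<open>Both bounds are tangent inequalities, at \<open>w - b y\<close> and at \<open>w\<close>.\<close>

lemma abs_powr_difference_quotient_bounds:
  fixes p b w y :: real
  assumes p: "p \<ge> 1" and b: "b > 0"
  shows "abs_powr_deriv p (w - b * y) * y \<le> (\<bar>w\<bar> powr p - \<bar>w - b * y\<bar> powr p) / b"
    and "(\<bar>w\<bar> powr p - \<bar>w - b * y\<bar> powr p) / b \<le> abs_powr_deriv p w * y"
proof -
  have "\<bar>w - b * y\<bar> powr p + abs_powr_deriv p (w - b * y) * (w - (w - b * y)) \<le> \<bar>w\<bar> powr p"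
    by (rule abs_powr_above_tangent[OF p])
  then show "abs_powr_deriv p (w - b * y) * y \<le> (\<bar>w\<bar> powr p - \<bar>w - b * y\<bar> powr p) / b"
    using b by (simp add: le_divide_eq algebra_simps)
  have "\<bar>w\<bar> powr p + abs_powr_deriv p w * ((w - b * y) - w) \<le> \<bar>w - b * y\<bar> powr p"
    by (rule abs_powr_above_tangent[OF p])
  then show "(\<bar>w\<bar> powr p - \<bar>w - b * y\<bar> powr p) / b \<le> abs_powr_deriv p w * y"
    using b by (simp add: divide_le_eq algebra_simps)
qed

lemma abs_powr_difference_quotient_abs_le:
  fixes p b w y :: real
  assumes p: "p \<ge> 1" and b: "0 < b" "b \<le> 1"
  shows "\<bar>(\<bar>w\<bar> powr p - \<bar>w - b * y\<bar> powr p) / b\<bar>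
    \<le> p * (2 powr p + 1) * (\<bar>w\<bar> powr p + \<bar>y\<bar> powr p)"
proof -
  have "\<bar>w + - (b * y)\<bar> powr p \<le> 2 powr p * (\<bar>w\<bar> powr p + \<bar>- (b * y)\<bar> powr p)"
    using p by (intro abs_add_powr_le) simp
  also have "\<dots> \<le> 2 powr p * (\<bar>w\<bar> powr p + \<bar>y\<bar> powr p)"
    using b p by (intro mult_left_mono add_left_mono powr_mono2)
      (auto simp: abs_mult mult_left_le_one_le)
  finally have "\<bar>w - b * y\<bar> powr p + \<bar>y\<bar> powr p
      \<le> (2 powr p + 1) * (\<bar>w\<bar> powr p + \<bar>y\<bar> powr p)"
    by (simp add: distrib_right add_increasing2)
  then have "p * (\<bar>w - b * y\<bar> powr p + \<bar>y\<bar> powr p)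
      \<le> p * (2 powr p + 1) * (\<bar>w\<bar> powr p + \<bar>y\<bar> powr p)"
    using p unfolding mult.assoc by (intro mult_left_mono) auto
  moreover have "p * (\<bar>w\<bar> powr p + \<bar>y\<bar> powr p) \<le> p * (2 powr p + 1) * (\<bar>w\<bar> powr p + \<bar>y\<bar> powr p)"
    using p by (intro mult_right_mono) auto
  ultimately show ?thesis
    using abs_powr_difference_quotient_bounds[OF p b(1), where w = w and y = y]
      abs_powr_deriv_mult_le[OF p, of w y] abs_powr_deriv_mult_le[OF p, of "w - b * y" y]
    by linarith
qed

lemma integral_abs_powr_difference_quotient_tendsto:
  fixes W Y :: "'a \<Rightarrow> real"
  assumes p: "p \<ge> 1"
    and [measurable]: "W \<in> borel_measurable M" "Y \<in> borel_measurable M"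
    and int: "integrable M (\<lambda>\<omega>. \<bar>W \<omega>\<bar> powr p)" "integrable M (\<lambda>\<omega>. \<bar>Y \<omega>\<bar> powr p)"
    and nz: "AE \<omega> in M. W \<omega> \<noteq> 0"
    and b: "b \<longlonglongrightarrow> 0" "\<And>n. 0 < b n" "\<And>n. b n \<le> 1"
  shows "(\<lambda>n. \<integral>\<omega>. (\<bar>W \<omega>\<bar> powr p - \<bar>W \<omega> - b n * Y \<omega>\<bar> powr p) / b n \<partial>M)
    \<longlonglongrightarrow> (\<integral>\<omega>. abs_powr_deriv p (W \<omega>) * Y \<omega> \<partial>M)"
proof (rule integral_dominated_convergence
    [where s = "\<lambda>n \<omega>. (\<bar>W \<omega>\<bar> powr p - \<bar>W \<omega> - b n * Y \<omega>\<bar> powr p) / b n"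
      and w = "\<lambda>\<omega>. p * (2 powr p + 1) * (\<bar>W \<omega>\<bar> powr p + \<bar>Y \<omega>\<bar> powr p)"])
  show "integrable M (\<lambda>\<omega>. p * (2 powr p + 1) * (\<bar>W \<omega>\<bar> powr p + \<bar>Y \<omega>\<bar> powr p))"
    using int by auto
  show "AE \<omega> in M. norm ((\<bar>W \<omega>\<bar> powr p - \<bar>W \<omega> - b n * Y \<omega>\<bar> powr p) / b n)
      \<le> p * (2 powr p + 1) * (\<bar>W \<omega>\<bar> powr p + \<bar>Y \<omega>\<bar> powr p)" for n
    using abs_powr_difference_quotient_abs_le[OF p b(2,3)] by simp
  show "AE \<omega> in M. (\<lambda>n. (\<bar>W \<omega>\<bar> powr p - \<bar>W \<omega> - b n * Y \<omega>\<bar> powr p) / b n)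
      \<longlonglongrightarrow> abs_powr_deriv p (W \<omega>) * Y \<omega>"
    using nz
  proof eventually_elim
    fix \<omega> assume "W \<omega> \<noteq> 0"
    moreover have "(\<lambda>n. W \<omega> - b n * Y \<omega>) \<longlonglongrightarrow> W \<omega>"
      using tendsto_diff[OF tendsto_const tendsto_mult_right[OF b(1)]] by simp
    ultimately have lim: "(\<lambda>n. abs_powr_deriv p (W \<omega> - b n * Y \<omega>) * Y \<omega>)
        \<longlonglongrightarrow> abs_powr_deriv p (W \<omega>) * Y \<omega>"
      by (intro tendsto_mult_right isCont_tendsto_compose[OF isCont_abs_powr_deriv])
    show "(\<lambda>n. (\<bar>W \<omega>\<bar> powr p - \<bar>W \<omega> - b n * Y \<omega>\<bar> powr p) / b n)
        \<longlonglongrightarrow> abs_powr_deriv p (W \<omega>) * Y \<omega>"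
      by (rule tendsto_sandwich[OF _ _ lim tendsto_const])
        (use abs_powr_difference_quotient_bounds[OF p b(2)] in auto)
  qed
qed measurable

section \<open>Integrability and the standard normal distribution\<close>

lemma (in finite_measure) integrable_of_integrable_abs_powr:
  fixes W :: "'a \<Rightarrow> real"
  assumes "p \<ge> 1" and [measurable]: "W \<in> borel_measurable M"
    and "integrable M (\<lambda>\<omega>. \<bar>W \<omega>\<bar> powr p)"
  shows "integrable M W"
proof (rule Bochner_Integration.integrable_bound)
  show "integrable M (\<lambda>\<omega>. 1 + \<bar>W \<omega>\<bar> powr p)" using assms by auto
  show "AE \<omega> in M. norm (W \<omega>) \<le> norm (1 + \<bar>W \<omega>\<bar> powr p)"
    using abs_powr_le_one_plus[of 1 p] assms(1) by (intro AE_I2) auto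
qed simp

lemma (in finite_measure) integrable_abs_powr_deriv:
  fixes V :: "'a \<Rightarrow> real"
  assumes p: "p \<ge> 1" and [measurable]: "V \<in> borel_measurable M"
    and "integrable M (\<lambda>\<omega>. \<bar>V \<omega>\<bar> powr p)"
  shows "integrable M (\<lambda>\<omega>. abs_powr_deriv p (V \<omega>))"
proof (rule Bochner_Integration.integrable_bound)
  show "integrable M (\<lambda>\<omega>. p * (\<bar>V \<omega>\<bar> powr p + \<bar>1\<bar> powr p))" using assms by auto
  show "AE \<omega> in M. norm (abs_powr_deriv p (V \<omega>)) \<le> norm (p * (\<bar>V \<omega>\<bar> powr p + \<bar>1\<bar> powr p))"
    using abs_powr_deriv_mult_le[OF p, of _ 1] p by (intro AE_I2) simp
qed simp

lemma integrable_abs_powr_std_normal: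
  fixes p :: real
  assumes Z: "distributed M lborel Z std_normal_density" and p: "p \<ge> 0"
  shows "integrable M (\<lambda>\<omega>. \<bar>Z \<omega>\<bar> powr p)"
proof -
  define n where "n = nat \<lceil>p\<rceil>"
  have n: "p \<le> real n" unfolding n_def by linarith
  have "integrable lborel (\<lambda>x. std_normal_density x * \<bar>x\<bar> powr p)"
  proof (rule Bochner_Integration.integrable_bound)
    show "integrable lborel (\<lambda>x. std_normal_density x * \<bar>x\<bar> ^ 0 + std_normal_density x * \<bar>x\<bar> ^ n)"
      by (intro Bochner_Integration.integrable_add integrable_std_normal_moment_abs)
    have "\<bar>x\<bar> powr p \<le> 1 + \<bar>x\<bar> ^ n" for x :: real
      using abs_powr_le_one_plus[OF p n, of x] by (cases "x = 0") (auto simp: powr_realpow)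
    then have "std_normal_density x * \<bar>x\<bar> powr p \<le> std_normal_density x * (1 + \<bar>x\<bar> ^ n)"
      for x :: real
      by (rule mult_left_mono) (rule normal_density_nonneg)
    then show "AE x in lborel. norm (std_normal_density x * \<bar>x\<bar> powr p)
        \<le> norm (std_normal_density x * \<bar>x\<bar> ^ 0 + std_normal_density x * \<bar>x\<bar> ^ n)"
      using normal_density_nonneg by (intro AE_I2) (simp add: distrib_left)
  qed simp
  then show ?thesis
    using distributed_integrable[OF Z, of "\<lambda>z. \<bar>z\<bar> powr p"] normal_density_nonneg by simp
qed

lemma integral_odd_std_normal:
  fixes g :: "real \<Rightarrow> real"
  assumes Z: "distributed M lborel Z std_normal_density"
    and [measurable]: "g \<in> borel_measurable borel" and odd: "\<And>x. g (- x) = - g x"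
  shows "(\<integral>\<omega>. g (Z \<omega>) \<partial>M) = 0"
proof -
  define f where "f x = std_normal_density x * g x" for x
  have "(\<integral>x. f x \<partial>lborel) = \<bar>- 1\<bar> *\<^sub>R (\<integral>x. f (0 + (- 1) * x) \<partial>lborel)"
    by (rule lborel_integral_real_affine) simp
  also have "\<dots> = - (\<integral>x. f x \<partial>lborel)"
    by (simp add: f_def odd std_normal_density_def)
  finally have "(\<integral>x. f x \<partial>lborel) = 0" by simp
  then show ?thesis
    using distributed_integral[OF Z, of g] normal_density_nonneg by (simp add: f_def)
qed

lemma AE_distributed_lborel_neq:
  fixes Z :: "'a \<Rightarrow> real" and f :: "real \<Rightarrow> real"
  assumes Z: "distributed M lborel Z f"
  shows "AE \<omega> in M. Z \<omega> \<noteq> c"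
proof (rule AE_I')
  have "AE x in lborel. ennreal (f x) * indicator {c} x = 0"
    using AE_lborel_singleton[of c] by eventually_elim simp
  then have "emeasure M (Z -` {c} \<inter> space M) = 0"
    by (simp add: distributed_emeasure[OF Z] nn_integral_0_iff_AE)
  then show "Z -` {c} \<inter> space M \<in> null_sets M"
    using distributed_measurable[OF Z] by (auto simp: null_sets_def)
qed auto

section \<open>The \<open>L\<^sup>p\<close> risk of linear estimators from a Gaussian observation\<close>

lemma convex_on_minimum_in_unit_interval:
  fixes f :: "real \<Rightarrow> real"
  assumes convex: "convex_on UNIV f"
    and left: "\<And>a. a < 0 \<Longrightarrow> f 0 \<le> f a"
    and dip: "c \<in> {0..<1}" "f c < f 1"
  shows "\<exists>a0\<in>{0..<1}. \<forall>a. f a0 \<le> f a"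
proof -
  have "continuous_on {0..1} f"
    using convex_on_continuous[OF open_UNIV convex] by (rule continuous_on_subset) simp
  then obtain a0 where a0: "a0 \<in> {0..1}" and min01: "\<And>y. y \<in> {0..1} \<Longrightarrow> f a0 \<le> f y"
    using continuous_attains_inf[of "{0..1::real}" f] by auto
  have "a0 \<noteq> 1" using min01[of c] dip by auto
  with a0 have a0': "a0 \<in> {0..<1}" by auto
  have right: "f a0 \<le> f a" if "1 < a" for a
  proof (rule ccontr)
    assume less: "\<not> f a0 \<le> f a"
    define t where "t = (1 - a0) / (a - a0)"
    have t: "0 < t" "t < 1" using a0' that by (auto simp: t_def field_simps)
    have "t * (a - a0) = 1 - a0"
      using a0' that by (simp add: t_def)
    then have "(1 - t) *\<^sub>R a0 + t *\<^sub>R a = 1"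
      by (simp add: algebra_simps)
    then have "f 1 \<le> (1 - t) * f a0 + t * f a"
      using convex_onD[OF convex, of t a0 a] t by simp
    also have "\<dots> < (1 - t) * f a0 + t * f a0"
      using less t by simp
    finally show False using min01[of 1] by (simp add: algebra_simps)
  qed
  have "f a0 \<le> f a" for a
    using min01[of a] min01[of 0] left[of a] right[of a] by (cases "a < 0"; cases "1 < a") auto
  with a0' show ?thesis by blast
qed

locale additive_gaussian_noise = prob_space M for M :: "'s measure" +
  fixes X Z :: "'s \<Rightarrow> real" and p :: real
  assumes X_measurable [measurable]: "X \<in> borel_measurable M"
    and Z_std_normal: "distributed M lborel Z std_normal_density"
    and indep_X_Z: "indep_var borel X borel Z"
    and p: "p \<ge> 1"
    and integrable_abs_powr_X: "integrable M (\<lambda>\<omega>. \<bar>X \<omega>\<bar> powr p)"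
begin

definition risk :: "real \<Rightarrow> real" where
  "risk a = (\<integral>\<omega>. \<bar>X \<omega> - a * (X \<omega> + Z \<omega>)\<bar> powr p \<partial>M)"

lemma Z_measurable [measurable]: "Z \<in> borel_measurable M"
  using distributed_measurable[OF Z_std_normal] by simp

lemma integrable_abs_powr_Z: "integrable M (\<lambda>\<omega>. \<bar>Z \<omega>\<bar> powr p)"
  using p by (intro integrable_abs_powr_std_normal[OF Z_std_normal]) simp

lemma integrable_abs_powr_linear: "integrable M (\<lambda>\<omega>. \<bar>c * X \<omega> + d * Z \<omega>\<bar> powr p)"
proof (rule Bochner_Integration.integrable_bound)
  show "integrable M (\<lambda>\<omega>. 2 powr p * (\<bar>c\<bar> powr p * \<bar>X \<omega>\<bar> powr p + \<bar>d\<bar> powr p * \<bar>Z \<omega>\<bar> powr p))"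
    using integrable_abs_powr_X integrable_abs_powr_Z by auto
  show "AE \<omega> in M. norm (\<bar>c * X \<omega> + d * Z \<omega>\<bar> powr p)
      \<le> norm (2 powr p * (\<bar>c\<bar> powr p * \<bar>X \<omega>\<bar> powr p + \<bar>d\<bar> powr p * \<bar>Z \<omega>\<bar> powr p))"
    using abs_add_powr_le[of p "c * X _" "d * Z _"] p by (intro AE_I2) (simp add: abs_mult powr_mult)
qed simp

lemma integrable_risk: "integrable M (\<lambda>\<omega>. \<bar>X \<omega> - a * (X \<omega> + Z \<omega>)\<bar> powr p)"
  using integrable_abs_powr_linear[of "1 - a" "- a"] by (simp add: algebra_simps)

lemma convex_on_risk: "convex_on UNIV risk"
proof (rule convex_onI)
  fix t x y :: real
  assume t: "0 < t" "t < 1"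
  let ?e = "\<lambda>a \<omega>. X \<omega> - a * (X \<omega> + Z \<omega>)"
  have "?e ((1 - t) * x + t * y) \<omega> = (1 - t) * ?e x \<omega> + t * ?e y \<omega>" for \<omega>
    by (simp add: algebra_simps)
  then have pointwise: "\<bar>?e ((1 - t) * x + t * y) \<omega>\<bar> powr p
      \<le> (1 - t) * \<bar>?e x \<omega>\<bar> powr p + t * \<bar>?e y \<omega>\<bar> powr p" for \<omega>
    using convex_onD[OF convex_on_abs_powr[OF p], of t "?e x \<omega>" "?e y \<omega>"] t by simp
  have "risk ((1 - t) * x + t * y)
      \<le> (\<integral>\<omega>. (1 - t) * \<bar>?e x \<omega>\<bar> powr p + t * \<bar>?e y \<omega>\<bar> powr p \<partial>M)"
    unfolding risk_def
    by (rule integral_mono[OF integrable_risk _ pointwise])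
      (intro Bochner_Integration.integrable_add integrable_mult_right integrable_risk)
  also have "\<dots> = (1 - t) * risk x + t * risk y"
    unfolding risk_def using integrable_risk by simp
  finally show "risk ((1 - t) *\<^sub>R x + t *\<^sub>R y) \<le> (1 - t) * risk x + t * risk y"
    by simp
qed simp

lemma integral_mult_centered_noise:
  fixes g h :: "real \<Rightarrow> real"
  assumes [measurable]: "g \<in> borel_measurable borel" "h \<in> borel_measurable borel"
    and integrable: "integrable M (\<lambda>\<omega>. g (X \<omega>))" "integrable M (\<lambda>\<omega>. h (Z \<omega>))"
    and centered: "(\<integral>\<omega>. h (Z \<omega>) \<partial>M) = 0"
  shows "integrable M (\<lambda>\<omega>. g (X \<omega>) * h (Z \<omega>))"
    and "(\<integral>\<omega>. g (X \<omega>) * h (Z \<omega>) \<partial>M) = 0"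
proof -
  have indep: "indep_var borel (\<lambda>\<omega>. g (X \<omega>)) borel (\<lambda>\<omega>. h (Z \<omega>))"
    using indep_var_compose[unfolded comp_def, OF indep_X_Z, of g borel h borel] by simp
  show "integrable M (\<lambda>\<omega>. g (X \<omega>) * h (Z \<omega>))"
    using indep_var_integrable[OF indep integrable] .
  show "(\<integral>\<omega>. g (X \<omega>) * h (Z \<omega>) \<partial>M) = 0"
    using indep_var_lebesgue_integral[OF indep integrable] centered by simp
qed

lemma risk_0_le_negative: "a < 0 \<Longrightarrow> risk 0 \<le> risk a"
proof -
  assume a: "a < 0"
  let ?g = "\<lambda>x. abs_powr_deriv p ((1 - a) * x)"
  have integrable_abs_powr_scaled: "integrable M (\<lambda>\<omega>. \<bar>(1 - a) * X \<omega>\<bar> powr p)"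
    using integrable_abs_powr_linear[of "1 - a" 0] by simp
  have "?g \<in> borel_measurable borel" by measurable
  moreover have "integrable M (\<lambda>\<omega>. ?g (X \<omega>))"
    using p integrable_abs_powr_scaled by (intro integrable_abs_powr_deriv) auto
  moreover have "integrable M Z"
    by (rule integrable_of_integrable_abs_powr[OF p Z_measurable integrable_abs_powr_Z])
  moreover have "expectation Z = 0"
    by (rule integral_odd_std_normal[OF Z_std_normal]) auto
  ultimately have centered: "integrable M (\<lambda>\<omega>. ?g (X \<omega>) * Z \<omega>)"
      "(\<integral>\<omega>. ?g (X \<omega>) * Z \<omega> \<partial>M) = 0"
    using integral_mult_centered_noise[OF _ measurable_ident_sets[OF refl]] by blast+
  have tangent: "\<bar>(1 - a) * X \<omega>\<bar> powr p + (- a) * (?g (X \<omega>) * Z \<omega>)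
      \<le> \<bar>X \<omega> - a * (X \<omega> + Z \<omega>)\<bar> powr p" for \<omega>
    using abs_powr_above_tangent[OF p, of "(1 - a) * X \<omega>" "X \<omega> - a * (X \<omega> + Z \<omega>)"]
    by (simp add: algebra_simps)
  have "(1 - a) powr p * risk 0
      = (\<integral>\<omega>. \<bar>(1 - a) * X \<omega>\<bar> powr p + (- a) * (?g (X \<omega>) * Z \<omega>) \<partial>M)"
    using a integrable_abs_powr_scaled centered by (simp add: risk_def abs_mult powr_mult)
  also have "\<dots> \<le> risk a"
    unfolding risk_def using integrable_abs_powr_scaled centered(1)
    by (intro integral_mono[OF _ integrable_risk tangent] Bochner_Integration.integrable_add
        integrable_mult_right)
  finally have "(1 - a) powr p * risk 0 \<le> risk a" .
  moreover have "risk 0 \<le> (1 - a) powr p * risk 0"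
    using a p ge_one_powr_ge_zero[of "1 - a" p] mult_right_mono[of 1 "(1 - a) powr p" "risk 0"]
    by (simp add: risk_def)
  ultimately show ?thesis by simp
qed

lemma integral_abs_powr_Z_pos: "0 < (\<integral>\<omega>. \<bar>Z \<omega>\<bar> powr p \<partial>M)"
proof -
  have "(\<integral>\<omega>. \<bar>Z \<omega>\<bar> powr p \<partial>M) \<noteq> 0"
  proof
    assume "(\<integral>\<omega>. \<bar>Z \<omega>\<bar> powr p \<partial>M) = 0"
    then have "AE \<omega> in M. \<bar>Z \<omega>\<bar> powr p = 0"
      using integral_nonneg_eq_0_iff_AE[OF integrable_abs_powr_Z] by simp
    with AE_distributed_lborel_neq[OF Z_std_normal, of 0] have "AE \<omega> in M. False"
      by eventually_elim simp
    then show False by simp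
  qed
  then show ?thesis by (simp add: order_less_le)
qed

lemma risk_left_difference_quotient_tendsto:
  assumes b: "b \<longlonglongrightarrow> 0" "\<And>n. 0 < b n" "\<And>n. b n \<le> 1"
  shows "(\<lambda>n. (risk 1 - risk (1 - b n)) / b n) \<longlonglongrightarrow> p * (\<integral>\<omega>. \<bar>Z \<omega>\<bar> powr p \<partial>M)"
proof -
  let ?Y = "\<lambda>\<omega>. X \<omega> + Z \<omega>"
  have integrable_abs_powr_Y: "integrable M (\<lambda>\<omega>. \<bar>?Y \<omega>\<bar> powr p)"
    using integrable_abs_powr_linear[of 1 1] by simp
  have quotient: "(risk 1 - risk (1 - b n)) / b n
      = (\<integral>\<omega>. (\<bar>Z \<omega>\<bar> powr p - \<bar>Z \<omega> - b n * ?Y \<omega>\<bar> powr p) / b n \<partial>M)" for n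
  proof -
    have "\<bar>X \<omega> - (1 - b n) * ?Y \<omega>\<bar> = \<bar>Z \<omega> - b n * ?Y \<omega>\<bar>" for \<omega>
      by (simp add: algebra_simps abs_minus_commute)
    then have "risk (1 - b n) = (\<integral>\<omega>. \<bar>Z \<omega> - b n * ?Y \<omega>\<bar> powr p \<partial>M)"
      by (simp add: risk_def)
    moreover have "integrable M (\<lambda>\<omega>. \<bar>Z \<omega> - b n * ?Y \<omega>\<bar> powr p)"
      using integrable_abs_powr_linear[of "- b n" "1 - b n"] by (simp add: algebra_simps)
    ultimately show ?thesis
      using integrable_abs_powr_Z by (simp add: risk_def)
  qed
  have "integrable M (\<lambda>\<omega>. abs_powr_deriv p (Z \<omega>))"
    using p integrable_abs_powr_Z by (intro integrable_abs_powr_deriv) auto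
  moreover have "integrable M X"
    by (rule integrable_of_integrable_abs_powr[OF p X_measurable integrable_abs_powr_X])
  moreover have "(\<integral>\<omega>. abs_powr_deriv p (Z \<omega>) \<partial>M) = 0"
    by (rule integral_odd_std_normal[OF Z_std_normal]) (auto simp: abs_powr_deriv_minus)
  ultimately have "integrable M (\<lambda>\<omega>. X \<omega> * abs_powr_deriv p (Z \<omega>))"
      "(\<integral>\<omega>. X \<omega> * abs_powr_deriv p (Z \<omega>) \<partial>M) = 0"
    using integral_mult_centered_noise[OF measurable_ident_sets[OF refl] abs_powr_deriv_measurable]
    by blast+
  then have "(\<integral>\<omega>. abs_powr_deriv p (Z \<omega>) * ?Y \<omega> \<partial>M) = p * (\<integral>\<omega>. \<bar>Z \<omega>\<bar> powr p \<partial>M)"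
    using integrable_abs_powr_Z
    by (simp add: distrib_left abs_powr_deriv_mult_self mult.commute[of _ "X _"])
  moreover have "(\<lambda>n. (risk 1 - risk (1 - b n)) / b n)
      \<longlonglongrightarrow> (\<integral>\<omega>. abs_powr_deriv p (Z \<omega>) * ?Y \<omega> \<partial>M)"
    unfolding quotient
    using integral_abs_powr_difference_quotient_tendsto[OF p Z_measurable _ integrable_abs_powr_Z
        integrable_abs_powr_Y AE_distributed_lborel_neq[OF Z_std_normal] b]
    by simp
  ultimately show ?thesis by simp
qed

lemma risk_dips_below_risk_1: "\<exists>c\<in>{0..<1}. risk c < risk 1"
proof -
  define b where "b n = inverse (real (Suc n))" for n
  have b: "b \<longlonglongrightarrow> 0" "0 < b n" "b n \<le> 1" for n
    unfolding b_def using LIMSEQ_inverse_real_of_nat by (auto simp: field_simps)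
  have "0 < p * (\<integral>\<omega>. \<bar>Z \<omega>\<bar> powr p \<partial>M)"
    using p integral_abs_powr_Z_pos by simp
  from order_tendstoD(1)[OF risk_left_difference_quotient_tendsto[OF b] this]
  obtain n where "0 < (risk 1 - risk (1 - b n)) / b n"
    by (auto simp: eventually_sequentially)
  then have "risk (1 - b n) < risk 1"
    using b(2)[of n] by (simp add: zero_less_divide_iff)
  moreover have "1 - b n \<in> {0..<1}" using b(2,3)[of n] by simp
  ultimately show ?thesis by blast
qed

end

theorem theorem1:
  fixes M :: "'s measure" and X Z :: "'s \<Rightarrow> real" and p :: real
  assumes "prob_space M"
    and "X \<in> borel_measurable M"
    and "distributed M lborel Z std_normal_density"
    and "prob_space.indep_var M borel X borel Z"
    and "p \<ge> 1"
    and "integrable M (\<lambda>\<omega>. \<bar>X \<omega>\<bar> powr p)"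
  shows "\<exists>a0 \<in> {0..<1}. \<forall>a::real.
           (\<integral>\<^sup>+ \<omega>. ennreal (\<bar>X \<omega> - a0 * (X \<omega> + Z \<omega>)\<bar> powr p) \<partial>M)
         \<le> (\<integral>\<^sup>+ \<omega>. ennreal (\<bar>X \<omega> - a * (X \<omega> + Z \<omega>)\<bar> powr p) \<partial>M)"
proof -
  interpret additive_gaussian_noise M X Z p
    using assms by (simp add: additive_gaussian_noise_def additive_gaussian_noise_axioms_def)
  obtain a0 where a0: "a0 \<in> {0..<1}" "\<And>a. risk a0 \<le> risk a"
    using risk_dips_below_risk_1
      convex_on_minimum_in_unit_interval[OF convex_on_risk risk_0_le_negative] by blast
  have "(\<integral>\<^sup>+ \<omega>. ennreal (\<bar>X \<omega> - a * (X \<omega> + Z \<omega>)\<bar> powr p) \<partial>M) = ennreal (risk a)" for a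
    unfolding risk_def by (rule nn_integral_eq_integral[OF integrable_risk]) simp
  with a0 show ?thesis by (auto intro!: bexI[of _ a0] ennreal_leI)
qed

end
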